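(* The code $\mathcal C_3(\mathbb D_d)$ is the $\mathbb F_3$-linear span of the vectors (functions of $t\in\mathbb F_{3^{2m}}$) \[ \mathrm{Tr}_{2m}(bt)\mathrm{Tr}_{2m}(b't),\quad \mathrm{Tr}_{2m}(bt),\quad \mathrm{Tr}_{2m}(at^{3^m+1})\mathrm{Tr}_{2m}(bt),\quad \mathrm{Tr}_{2m}(at^{3^m+1})\mathrm{Tr}_{2m}(a't^{3^m+1}),\quad \mathrm{Tr}_{2m}(at^{3^m+1}),\quad \mathbf 1, \] where $a,a'$ range over $\mathbb F_{3^m}^*$ and $b,b'$ range over $\mathbb F_{3^{2m}}$, and $\mathbf 1$ is the all-one vector.
   Context: Let $m\ge 2$ be an integer. For $s\in\{m,2m\}$ let $\mathrm{Tr}_s:\mathbb F_{3^s}\to\mathbb F_3$ denote the absolute trace. Vectors in $\mathbb F_3^{3^{2m}}$ are indexed by $\mathbb F_{3^{2m}}$, and a function $f:\mathbb F_{3^{2m}}\to\mathbb F_3$ is identified with $(f(t))_{t\in\mathbb F_{3^{2m}}}$; products are pointwise. Let $\mathcal C(2m,3)=\{(\mathrm{Tr}_{2m}(at^{3^m+1}+bt)+h)_{t\in\mathbb F_{3^{2m}}}: a\in\mathbb F_{3^m}, b\in\mathbb F_{3^{2m}}, h\in\mathbb F_3\}$, let $d$ be its minimum nonzero Hamming weight, let $\mathbb D_d$ be the incidence structure on $\mathbb F_{3^{2m}}$ whose blocks are the supports of the weight-$d$ codewords, and let $\mathcal C_3(\mathbb D_d)$ be the $\mathbb F_3$-span of the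 incidence vectors of the blocks (entry $1$ on the block, $0$ elsewhere). *)

theory Defs
  imports Main
begin

text \<open>The field F_(3^(2m)) is modelled as a finite field type 'a with CARD('a) = 3^(2m).
  F_3 is its prime subfield {x. x^3 = x}, F_(3^m) the subfield {x. x^(3^m) = x}.
  Vectors in F_3^(3^(2m)) indexed by F_(3^(2m)) are functions 'a => 'a with values in F_3.\<close>

definition F3 :: "'a::field set" where
  "F3 = {x. x ^ 3 = x}"

definition subF :: "nat \<Rightarrow> 'a::field set" where
  "subF s = {x. x ^ (3 ^ s) = x}"

definition Tr :: "nat \<Rightarrow> 'a::field \<Rightarrow> 'a" where
  "Tr s x = (\<Sum>i<s. x ^ (3 ^ i))"

definition codeC :: "nat \<Rightarrow> ('a::{field,finite} \<Rightarrow> 'a) set" where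
  "codeC m = {(\<lambda>t. Tr (2*m) (a * t ^ (3^m + 1) + b * t) + h) | a b h.
                a \<in> subF m \<and> h \<in> F3}"

definition hweight :: "('a \<Rightarrow> 'b::zero) \<Rightarrow> nat" where
  "hweight c = card {t. c t \<noteq> 0}"

definition minw :: "('a::{field,finite} \<Rightarrow> 'a) set \<Rightarrow> nat" where
  "minw C = Min {hweight c | c. c \<in> C \<and> c \<noteq> (\<lambda>_. 0)}"

definition blocks :: "('a::{field,finite} \<Rightarrow> 'a) set \<Rightarrow> 'a set set" where
  "blocks C = {{t. c t \<noteq> 0} | c. c \<in> C \<and> c \<noteq> (\<lambda>_. 0) \<and> hweight c = minw C}"

definition incvec :: "'a set \<Rightarrow> ('a \<Rightarrow> 'b::{zero,one})" where
  "incvec B = (\<lambda>t. if t \<in> B then 1 else 0)"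

definition span3 :: "('a \<Rightarrow> 'b::field) set \<Rightarrow> ('a \<Rightarrow> 'b) set" where
  "span3 S = {f. \<exists>(n::nat) (c::nat \<Rightarrow> 'b) (v::nat \<Rightarrow> 'a \<Rightarrow> 'b). (\<forall>i<n. c i \<in> F3 \<and> v i \<in> S) \<and> f = (\<lambda>t. \<Sum>i<n. c i * v i t)}"

definition gens :: "nat \<Rightarrow> ('a::{field,finite} \<Rightarrow> 'a) set" where
  "gens m =
     {(\<lambda>t. Tr (2*m) (b*t) * Tr (2*m) (b'*t)) | b b'. True}
   \<union> {(\<lambda>t. Tr (2*m) (b*t)) | b. True}
   \<union> {(\<lambda>t. Tr (2*m) (a * t^(3^m+1)) * Tr (2*m) (b*t)) | a b. a \<in> subF m - {0}}
   \<union> {(\<lambda>t. Tr (2*m) (a * t^(3^m+1)) * Tr (2*m) (a' * t^(3^m+1))) | a a'.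
         a \<in> subF m - {0} \<and> a' \<in> subF m - {0}}
   \<union> {(\<lambda>t. Tr (2*m) (a * t^(3^m+1))) | a. a \<in> subF m - {0}}
   \<union> {(\<lambda>t. 1)}"

end

theory Submission
  imports Defs "HOL-Number_Theory.Residues" "HOL-Computational_Algebra.Polynomial"
begin

text \<open>Write \<open>q = 3^m\<close>, \<open>Q\<^sub>a(t) = Tr(a t\<^sup>q\<^sup>+\<^sup>1)\<close> and \<open>L\<^sub>b(t) = Tr(b t)\<close>.
  Codewords take values in \<open>\<bbbF>\<^sub>3\<close>, so the incidence vector of the support of a codeword \<open>c\<close>
  is \<open>c\<^sup>2\<close>, and expanding \<open>(Q\<^sub>a + L\<^sub>b + h)\<^sup>2\<close> shows that every block lies in the span of the
  listed products.

  Conversely, \<open>Q\<^sub>a(t + s) = Q\<^sub>a(t) + Tr(2 a s\<^sup>q t) + Q\<^sub>a(s)\<close>, so for \<open>a \<noteq> 0\<close> every codeword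
  is a translate of \<open>Q\<^sub>a\<close> plus a constant.  Counting the level sets of \<open>Q\<^sub>a\<close> through the norm
  map \<open>t \<mapsto> t\<^sup>q\<^sup>+\<^sup>1\<close> onto \<open>\<bbbF>\<^sub>q\<close> shows that the translates with a nonzero constant have
  minimum weight, so their squares are blocks.  In characteristic 3 the identities
  \<open>(x + y)\<^sup>2 - (x - y)\<^sup>2 = x y\<close> and \<open>(x + y)\<^sup>2 + (x - y)\<^sup>2 = -(x\<^sup>2 + y\<^sup>2)\<close> recover from these
  squares first the translated quadrics, \<open>1\<close> and the \<open>L\<^sub>b\<close>, and then all the listed products.\<close>

section \<open>Arithmetic in characteristic 3\<close>

lemma CHAR_eq_3_of_card:
  assumes "card (UNIV :: 'a::{field,finite} set) = 3 ^ n"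
  shows "CHAR('a) = 3"
proof -
  have prime: "prime CHAR('a)"
    by (intro prime_CHAR_semidom finite_imp_CHAR_pos) simp
  moreover have "CHAR('a) dvd 3 ^ n"
    using CHAR_dvd_CARD[where 'a = 'a] assms by simp
  ultimately have "CHAR('a) dvd 3"
    by (rule prime_dvd_power)
  with prime show ?thesis
    by (intro primes_dvd_imp_eq) simp_all
qed

text \<open>The library proves this for the class \<open>finite_field\<close> only.\<close>

lemma power_card_UNIV_eq_self:
  fixes x :: "'a::{field,finite}"
  shows "x ^ card (UNIV :: 'a set) = x"
proof (cases "x = 0")
  case False
  let ?U = "UNIV - {0::'a}"
  have "(\<Prod>y\<in>?U. x * y) = (\<Prod>y\<in>?U. y)"
    by (rule prod.reindex_bij_witness[of _ "\<lambda>y. y / x" "\<lambda>y. x * y"]) (use False in auto)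
  then have "x ^ card ?U = 1"
    by (simp add: prod.distrib)
  moreover have "card (UNIV :: 'a set) = Suc (card ?U)"
    using finite_UNIV_card_ge_0[where 'a = 'a] by (simp add: card_Diff_singleton)
  ultimately show ?thesis
    by (simp only: power_Suc mult_1_right)
qed (simp add: power_0_left)

context
  assumes char3: "CHAR('a::comm_ring_1) = 3"
begin

lemma char3_three_eq_0: "(3::'a) = 0"
  by (metis char3 of_nat_CHAR of_nat_numeral)

lemma char3_two_eq_minus_one: "(2::'a) = -1"
  using char3_three_eq_0 by (simp add: eq_neg_iff_add_eq_0)

lemma char3_power_add: "(x + y :: 'a) ^ 3 ^ i = x ^ 3 ^ i + y ^ 3 ^ i"
  by (rule freshmans_dream') (simp_all add: char3)

lemma char3_power_minus: "(- x :: 'a) ^ 3 ^ i = - (x ^ 3 ^ i)"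
  using char3_power_add[of x "- x" i] by (simp add: eq_neg_iff_add_eq_0 add.commute)

lemma char3_power_sum: "(\<Sum>j\<in>J. f j :: 'a) ^ 3 ^ i = (\<Sum>j\<in>J. f j ^ 3 ^ i)"
  by (rule freshmans_dream_sum') (simp_all add: char3)

lemma char3_diff_squares: "(x + y + z)\<^sup>2 - (x - y + z)\<^sup>2 = (x + z) * (y :: 'a)"
proof -
  have "(x + y + z)\<^sup>2 - (x - y + z)\<^sup>2 = (x + z) * y + 3 * ((x + z) * y)"
    by (simp add: power2_eq_square algebra_simps)
  then show ?thesis
    by (simp add: char3_three_eq_0)
qed

lemma char3_sum_squares: "(x + y + z)\<^sup>2 + (x - y + z)\<^sup>2 = - ((x + z)\<^sup>2 + y\<^sup>2 :: 'a)"
proof -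
  have "(x + y + z)\<^sup>2 + (x - y + z)\<^sup>2 = - ((x + z)\<^sup>2 + y\<^sup>2) + 3 * ((x + z)\<^sup>2 + y\<^sup>2)"
    by (simp add: power2_eq_square algebra_simps)
  then show ?thesis
    by (simp add: char3_three_eq_0)
qed

end

lemma F3_iff: "(x::'a::field) \<in> F3 \<longleftrightarrow> x = 0 \<or> x = 1 \<or> x = -1"
proof -
  have "x ^ 3 - x = x * (x - 1) * (x + 1)"
    by (simp add: power3_eq_cube algebra_simps)
  then show ?thesis
    unfolding F3_def by (auto simp: eq_neg_iff_add_eq_0)
qed

lemma F3_0 [simp]: "0 \<in> F3" and F3_1 [simp]: "1 \<in> F3" and F3_minus_1 [simp]: "-1 \<in> F3"
  by (auto simp: F3_iff)

lemma F3_uminus: "(x::'a::field) \<in> F3 \<Longrightarrow> - x \<in> F3"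
  by (auto simp: F3_iff)

lemma F3_mult: "(x::'a::field) \<in> F3 \<Longrightarrow> y \<in> F3 \<Longrightarrow> x * y \<in> F3"
  by (simp add: F3_def power_mult_distrib)

lemma F3_square_eq_1: "(x::'a::field) \<in> F3 \<Longrightarrow> x \<noteq> 0 \<Longrightarrow> x\<^sup>2 = 1"
  by (auto simp: F3_iff)

lemma F3_power_3_pow: "(x::'a::field) \<in> F3 \<Longrightarrow> x ^ 3 ^ j = x"
  by (induction j) (simp_all add: F3_def power_mult)

lemma subF_0 [simp]: "(0::'a::field) \<in> subF m" and subF_1 [simp]: "(1::'a::field) \<in> subF m"
  by (simp_all add: subF_def power_0_left)

lemma subF_divide: "x \<in> subF m \<Longrightarrow> y \<in> subF m \<Longrightarrow> (x::'a::field) / y \<in> subF m"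
  by (simp add: subF_def power_divide)

lemma Tr_0 [simp]: "Tr s (0::'a::field) = 0"
  by (simp add: Tr_def power_0_left)

lemma sum_lessThan_add: "(\<Sum>i<m + (n::nat). f i) = (\<Sum>i<m. f i) + (\<Sum>i<n. f (m + i))"
  by (induction n) (simp_all add: add.assoc)

lemma Tr_double:
  assumes "(y::'a::field) \<in> subF m"
  shows "Tr (2 * m) y = 2 * Tr m y"
proof -
  have periodic: "y ^ 3 ^ (m + i) = y ^ 3 ^ i" for i
  proof -
    have "y ^ 3 ^ (m + i) = (y ^ 3 ^ m) ^ 3 ^ i"
      by (simp only: power_add power_mult)
    then show ?thesis
      using assms by (simp add: subF_def)
  qed
  have "Tr (2 * m) y = (\<Sum>i<m. y ^ 3 ^ i) + (\<Sum>i<m. y ^ 3 ^ (m + i))"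
    by (simp only: Tr_def mult_2 sum_lessThan_add)
  also have "\<dots> = 2 * Tr m y"
    by (simp only: periodic Tr_def mult_2)
  finally show ?thesis .
qed

context
  assumes char3: "CHAR('a::field) = 3"
begin

lemma F3_add: "(x::'a) \<in> F3 \<Longrightarrow> y \<in> F3 \<Longrightarrow> x + y \<in> F3"
  using char3_power_add[OF char3, of x y 1] by (simp add: F3_def)

lemma char3_two_neq_0: "(2::'a) \<noteq> 0"
  by (simp add: char3_two_eq_minus_one[OF char3])

lemma subF_add: "x \<in> subF m \<Longrightarrow> y \<in> subF m \<Longrightarrow> (x::'a) + y \<in> subF m"
  by (simp add: subF_def char3_power_add[OF char3])

lemma subF_uminus: "x \<in> subF m \<Longrightarrow> - (x::'a) \<in> subF m"
  by (simp add: subF_def char3_power_minus[OF char3])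

lemma subF_diff: "x \<in> subF m \<Longrightarrow> y \<in> subF m \<Longrightarrow> (x::'a) - y \<in> subF m"
  using subF_add[of x m "- y"] subF_uminus[of y m] by simp

lemma Tr_add: "Tr s (x + y :: 'a) = Tr s x + Tr s y"
  by (simp add: Tr_def char3_power_add[OF char3] sum.distrib)

lemma Tr_uminus: "Tr s (- x :: 'a) = - Tr s x"
  by (simp add: Tr_def char3_power_minus[OF char3] sum_negf)

lemma Tr_diff: "Tr s (x - y :: 'a) = Tr s x - Tr s y"
  using Tr_add[of s x "- y"] Tr_uminus[of s y] by simp

lemma Tr_cube:
  assumes "(x::'a) ^ 3 ^ s = x"
  shows "Tr s x ^ 3 = Tr s x"
proof -
  have "Tr s x ^ 3 = (\<Sum>i<s. x ^ 3 ^ Suc i)"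
    using char3_power_sum[OF char3, of "\<lambda>i. x ^ 3 ^ i" "{..<s}" 1]
    by (simp add: Tr_def power_mult[symmetric] mult.commute)
  also have "\<dots> = Tr s x"
  proof -
    have "(\<Sum>i<s. x ^ 3 ^ Suc i) + x ^ 3 ^ 0 = (\<Sum>i<Suc s. x ^ 3 ^ i)"
      by (simp only: sum.lessThan_Suc_shift add.commute)
    also have "\<dots> = (\<Sum>i<s. x ^ 3 ^ i) + x ^ 3 ^ s"
      by simp
    finally have "(\<Sum>i<s. x ^ 3 ^ Suc i) + x = (\<Sum>i<s. x ^ 3 ^ i) + x"
      using assms by (simp only: power_0 power_one_right)
    then show ?thesis
      by (simp only: Tr_def add_right_cancel)
  qed
  finally show ?thesis .
qed

lemma Tr_in_F3: "(x::'a) ^ 3 ^ s = x \<Longrightarrow> Tr s x \<in> F3"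
  using Tr_cube by (simp add: F3_def)

lemma Tr_power_3_pow:
  assumes "(x::'a) ^ 3 ^ s = x"
  shows "Tr s (x ^ 3 ^ j) = Tr s x"
proof -
  have "Tr s (x ^ 3 ^ j) = Tr s x ^ 3 ^ j"
    by (simp add: Tr_def char3_power_sum[OF char3] power_mult[symmetric] mult.commute)
  also have "\<dots> = Tr s x"
    by (rule F3_power_3_pow[OF Tr_in_F3[OF assms]])
  finally show ?thesis .
qed

end

section \<open>Counting\<close>

lemma F3_eq: "(F3 :: 'a::field set) = {0, 1, -1}"
  by (auto simp: F3_iff)

lemma card_F3:
  assumes "CHAR('a::field) = 3"
  shows "card (F3 :: 'a set) = 3"
proof -
  have "(1::'a) \<noteq> -1"
    using char3_two_neq_0[OF assms] by (metis one_add_one neg_eq_iff_add_eq_0)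
  then show ?thesis
    by (simp add: F3_eq)
qed

lemma card_roots_power_le:
  assumes "n \<ge> 1"
  shows "card {x::'a::idom. x ^ n = c} \<le> n"
proof -
  let ?p = "monom 1 n + [:- c:]"
  have deg: "degree ?p = n"
    using assms by (subst degree_add_eq_left) (simp_all add: degree_monom_eq)
  then have "?p \<noteq> 0"
    using assms by auto
  then have "card {x. poly ?p x = 0} \<le> n"
    using card_poly_roots_bound deg by metis
  moreover have "{x. poly ?p x = 0} = {x. x ^ n = c}"
    by (simp add: poly_monom)
  ultimately show ?thesis
    by simp
qed

lemma exists_Tr_nonzero:
  assumes "s \<ge> 1" and "card A > 3 ^ (s - 1)"
  obtains y :: "'a::field" where "y \<in> A" "Tr s y \<noteq> 0"
proof -
  define p :: "'a poly" where "p = (\<Sum>i<s. monom 1 (3 ^ i))"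
  have poly_p: "poly p = Tr s"
    by (simp add: p_def Tr_def poly_sum poly_monom fun_eq_iff)
  have "degree p \<le> 3 ^ (s - 1)"
    unfolding p_def
  proof (rule degree_sum_le)
    fix i assume "i \<in> {..<s}"
    then have "(3::nat) ^ i \<le> 3 ^ (s - 1)"
      by (intro power_increasing) auto
    then show "degree (monom (1::'a) (3 ^ i)) \<le> 3 ^ (s - 1)"
      by (simp add: degree_monom_eq)
  qed simp
  moreover have "p \<noteq> 0"
  proof -
    have "coeff p 1 = (\<Sum>i<s. if 3 ^ i = (1::nat) then 1 else 0)"
      by (simp add: p_def coeff_sum)
    also have "\<dots> = (\<Sum>i\<in>{0}. if 3 ^ i = (1::nat) then (1::'a) else 0)"
      by (rule sum.mono_neutral_right) (use assms(1) in auto)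
    finally show ?thesis
      by auto
  qed
  moreover have "card {y::'a. Tr s y = 0} \<le> degree p"
    using card_poly_roots_bound[OF \<open>p \<noteq> 0\<close>] by (simp add: poly_p)
  ultimately have "card {y::'a. Tr s y = 0} < card A"
    using assms(2) by linarith
  then have "\<not> A \<subseteq> {y. Tr s y = 0}"
    using poly_roots_finite[OF \<open>p \<noteq> 0\<close>] by (auto simp: poly_p dest: card_mono)
  then show ?thesis
    using that by blast
qed

text \<open>Translation by a point of value 1 permutes the level sets cyclically.\<close>

lemma card_level_set_additive:
  fixes f :: "'a::field \<Rightarrow> 'a"
  assumes char3: "CHAR('a) = 3" and "finite S"
    and add_closed: "\<And>x y. x \<in> S \<Longrightarrow> y \<in> S \<Longrightarrow> x + y \<in> S"
    and F3_valued: "\<And>x. x \<in> S \<Longrightarrow> f x \<in> F3"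
    and additive: "\<And>x y. x \<in> S \<Longrightarrow> y \<in> S \<Longrightarrow> f (x + y) = f x + f y"
    and "x0 \<in> S" "f x0 \<noteq> 0" and "u \<in> F3"
  shows "3 * card {x\<in>S. f x = u} = card S"
proof -
  define level where "level v = {x\<in>S. f x = v}" for v
  obtain y0 where y0: "y0 \<in> S" "f y0 = 1"
  proof (cases "f x0 = 1")
    case False
    then have "f x0 = -1"
      using F3_valued[of x0] assms(6,7) by (auto simp: F3_iff)
    then have "f (x0 + x0) = -1 + -1"
      using additive[OF assms(6) assms(6)] by (simp only:)
    also have "\<dots> = 1"
      using char3_two_eq_minus_one[OF char3] by simp
    finally have "f (x0 + x0) = 1" .
    then show ?thesis
      using that add_closed assms(6) by blast
  qed (use that assms(6) in blast)
  have shift_S: "(\<lambda>x. x + y0) ` S = S"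
    by (rule endo_inj_surj) (use \<open>finite S\<close> add_closed y0 in auto)
  have shift_level: "(\<lambda>x. x + y0) ` level v = level (v + 1)" for v
  proof
    show "(\<lambda>x. x + y0) ` level v \<subseteq> level (v + 1)"
      using add_closed additive y0 by (auto simp: level_def)
    show "level (v + 1) \<subseteq> (\<lambda>x. x + y0) ` level v"
    proof
      fix z assume z: "z \<in> level (v + 1)"
      then obtain x where "x \<in> S" "z = x + y0"
        using shift_S by (auto simp: level_def)
      with z show "z \<in> (\<lambda>x. x + y0) ` level v"
        using additive y0 by (auto simp: level_def)
    qed
  qed
  have card_shift: "card (level (v + 1)) = card (level v)" for v
    by (simp flip: shift_level add: card_image)
  have card_level: "card (level v) = card (level 0)" if "v \<in> F3" for v
    using that card_shift[of 0] card_shift[of 1] char3_two_eq_minus_one[OF char3]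
    by (auto simp: F3_iff one_add_one)
  have "f ` S \<subseteq> F3"
    using F3_valued by auto
  then have "card S = (\<Sum>v\<in>F3. card (level v))"
    using sum.group[of S F3 f "\<lambda>_. 1::nat"] \<open>finite S\<close> by (simp add: level_def F3_eq)
  also have "\<dots> = (\<Sum>v\<in>(F3 :: 'a set). card (level u))"
    by (intro sum.cong refl) (metis card_level \<open>u \<in> F3\<close>)
  also have "\<dots> = 3 * card (level u)"
    by (simp add: card_F3[OF char3])
  finally show ?thesis
    by (simp add: level_def)
qed

lemma sum_eq_bound_imp_card_eq:
  fixes f :: "'b \<Rightarrow> nat"
  assumes "finite R" and card_R: "card R \<le> c" and bound: "\<And>y. y \<in> R \<Longrightarrow> f y \<le> b"
    and sum_R: "(\<Sum>y\<in>R. f y) = c * b" and "b > 0"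
  shows "card R = c" and "\<And>y. y \<in> R \<Longrightarrow> f y = b"
proof -
  have "(\<Sum>y\<in>R. f y) \<le> card R * b"
    using sum_mono[of R f "\<lambda>_. b", OF bound] by simp
  with card_R sum_R \<open>b > 0\<close> show card: "card R = c"
    by (metis le_antisym mult_le_mono1 mult_le_cancel2)
  show "f y = b" if "y \<in> R" for y
  proof (rule ccontr)
    assume "f y \<noteq> b"
    with bound that have "(\<Sum>y\<in>R. f y) < (\<Sum>y\<in>R. b)"
      by (intro sum_strict_mono_ex1 \<open>finite R\<close>) (auto intro!: bexI[OF _ that] le_neq_trans)
    with sum_R card show False
      by simp
  qed
qed

lemma card_translate: "card {t. P (t + s)} = card {t::'a::ab_group_add. P t}"
  by (rule bij_betw_same_card[of "\<lambda>t. t + s"], rule bij_betw_byWitness[of _ "\<lambda>t. t - s"]) auto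

lemma hweight_zero [simp]: "hweight (\<lambda>_. 0) = 0"
  by (simp add: hweight_def)

lemma hweight_eq_card_diff_zeros:
  "hweight (c :: 'a::finite \<Rightarrow> 'b::zero) = card (UNIV :: 'a set) - card {t. c t = 0}"
proof -
  have "{t. c t \<noteq> 0} = UNIV - {t. c t = 0}"
    by auto
  then show ?thesis
    by (simp add: hweight_def card_Diff_subset)
qed

lemma norm_level_bound_lt:
  assumes "m \<ge> 1"
  shows "(3 ^ m + 1) * 3 ^ (m - 1) < (3::nat) ^ (2 * m)"
proof -
  define p :: nat where "p = 3 ^ (m - 1)"
  have q: "(3::nat) ^ m = 3 * p"
    using assms by (simp add: p_def flip: power_Suc)
  have "p > 0"
    by (simp add: p_def)
  then have "(3 * p + 1) * p < (9 * p) * p"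
    by (intro mult_less_mono1) simp_all
  moreover have "(3::nat) ^ (2 * m) = (9 * p) * p"
    by (simp add: mult_2 power_add q)
  ultimately show ?thesis
    by (simp add: q p_def)
qed

section \<open>Spans over \<open>\<bbbF>\<^sub>3\<close>\<close>

lemma span3_zero: "(\<lambda>t. 0) \<in> span3 S"
  by (auto simp: span3_def intro!: exI[of _ 0])

lemma span3_base: "f \<in> S \<Longrightarrow> f \<in> span3 S"
  by (auto simp: span3_def intro!: exI[of _ 1] exI[of _ "\<lambda>_. 1"] exI[of _ "\<lambda>_. f"])

lemma span3_add:
  assumes "f \<in> span3 S" "g \<in> span3 S"
  shows "(\<lambda>t. f t + g t) \<in> span3 S"
proof -
  obtain n1 :: nat and c1 v1 where 1: "\<forall>i<n1. c1 i \<in> F3 \<and> v1 i \<in> S" "f = (\<lambda>t. \<Sum>i<n1. c1 i * v1 i t)"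
    using assms(1) by (auto simp: span3_def)
  obtain n2 :: nat and c2 v2 where 2: "\<forall>i<n2. c2 i \<in> F3 \<and> v2 i \<in> S" "g = (\<lambda>t. \<Sum>i<n2. c2 i * v2 i t)"
    using assms(2) by (auto simp: span3_def)
  define c where "c i = (if i < n1 then c1 i else c2 (i - n1))" for i
  define v where "v i = (if i < n1 then v1 i else v2 (i - n1))" for i
  have "\<forall>i<n1 + n2. c i \<in> F3 \<and> v i \<in> S"
    using 1(1) 2(1) by (auto simp: c_def v_def)
  moreover have "(\<lambda>t. f t + g t) = (\<lambda>t. \<Sum>i<n1 + n2. c i * v i t)"
    by (simp add: 1(2) 2(2) c_def v_def sum_lessThan_add)
  ultimately show ?thesis
    unfolding span3_def by blast
qed

lemma span3_scale:
  assumes "a \<in> F3" "f \<in> span3 S"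
  shows "(\<lambda>t. a * f t) \<in> span3 S"
proof -
  obtain n :: nat and c v where cv: "\<forall>i<n. c i \<in> F3 \<and> v i \<in> S" "f = (\<lambda>t. \<Sum>i<n. c i * v i t)"
    using assms(2) by (auto simp: span3_def)
  then have "\<forall>i<n. a * c i \<in> F3 \<and> v i \<in> S"
    using assms(1) F3_mult by blast
  moreover have "(\<lambda>t. a * f t) = (\<lambda>t. \<Sum>i<n. (a * c i) * v i t)"
    by (simp add: cv(2) sum_distrib_left mult.assoc)
  ultimately show ?thesis
    unfolding span3_def by (intro CollectI exI[of _ n] exI[of _ "\<lambda>i. a * c i"] exI[of _ v]) simp
qed

lemma span3_diff:
  assumes "f \<in> span3 S" "g \<in> span3 S"
  shows "(\<lambda>t. f t - g t) \<in> span3 S"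
  using span3_add[OF assms(1) span3_scale[OF F3_minus_1 assms(2)]] by simp

lemma span3_sum:
  fixes n :: nat
  assumes "\<And>i. i < n \<Longrightarrow> c i \<in> F3 \<and> v i \<in> span3 S"
  shows "(\<lambda>t. \<Sum>i<n. c i * v i t) \<in> span3 S"
  using assms by (induction n) (simp_all add: span3_zero span3_add span3_scale)

lemma span3_subset_span3: "X \<subseteq> span3 Y \<Longrightarrow> span3 X \<subseteq> span3 Y"
  by (force simp: span3_def[of X] intro: span3_sum)

lemma span3_eqI: "X \<subseteq> span3 Y \<Longrightarrow> Y \<subseteq> span3 X \<Longrightarrow> span3 X = span3 Y"
  using span3_subset_span3 by blast

lemma incvec_support_eq_square:
  assumes "\<And>t. c t \<in> (F3 :: 'a::field set)"
  shows "incvec {t. c t \<noteq> 0} = (\<lambda>t. (c t)\<^sup>2)"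
  using assms F3_square_eq_1 by (fastforce simp: incvec_def)

lemma Tr_norm_terms_in_span_gens:
  fixes a b :: "'a::{field,finite}"
  assumes "a \<in> subF m"
  shows "(\<lambda>t. Tr (2 * m) (a * t ^ (3 ^ m + 1))) \<in> span3 (gens m)" (is ?A)
    and "(\<lambda>t. Tr (2 * m) (a * t ^ (3 ^ m + 1)) * Tr (2 * m) (a * t ^ (3 ^ m + 1))) \<in> span3 (gens m)" (is ?AA)
    and "(\<lambda>t. Tr (2 * m) (a * t ^ (3 ^ m + 1)) * Tr (2 * m) (b * t)) \<in> span3 (gens m)" (is ?AL)
proof -
  have "?A \<and> ?AA \<and> ?AL"
  proof (cases "a = 0")
    case True
    then show ?thesis
      by (simp add: span3_zero)
  next
    case False
    with assms have "a \<in> subF m - {0}"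
      by simp
    then show ?thesis
      unfolding gens_def by (intro conjI span3_base; blast)
  qed
  then show ?A ?AA ?AL
    by simp_all
qed

lemma Tr_linear_terms_in_span_gens:
  fixes b b' :: "'a::{field,finite}"
  shows "(\<lambda>t. Tr (2 * m) (b * t)) \<in> span3 (gens m)"
    and "(\<lambda>t. Tr (2 * m) (b * t) * Tr (2 * m) (b' * t)) \<in> span3 (gens m)"
    and "(\<lambda>t. 1 :: 'a) \<in> span3 (gens m)"
  by (intro span3_base; unfold gens_def; blast)+

section \<open>The field with \<open>3\<^sup>2\<^sup>m\<close> elements\<close>

locale gf_3_2m =
  fixes m :: nat
  assumes m_pos: "m \<ge> 1"
    and card_UNIV: "card (UNIV :: 'a::{field,finite} set) = 3 ^ (2 * m)"
begin

lemma CHAR_eq_3: "CHAR('a) = 3"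
  by (rule CHAR_eq_3_of_card[OF card_UNIV])

lemma three_eq_0: "(3::'a) = 0"
  by (rule char3_three_eq_0[OF CHAR_eq_3])

lemma power_3_pow_2m: "(x::'a) ^ 3 ^ (2 * m) = x"
  using power_card_UNIV_eq_self[of x] by (simp only: card_UNIV)

lemma power_3_pow_m_involution: "((x::'a) ^ 3 ^ m) ^ 3 ^ m = x"
  using power_3_pow_2m[of x] by (simp only: power_mult[symmetric] power_add[symmetric] mult_2)

lemma Tr_2m_in_F3: "Tr (2 * m) (x::'a) \<in> F3"
  by (rule Tr_in_F3[OF CHAR_eq_3 power_3_pow_2m])

lemma norm_in_subF:
  assumes "(t::'a) \<noteq> 0"
  shows "t ^ (3 ^ m + 1) \<in> subF m - {0}"
proof -
  have "(t ^ (3 ^ m + 1)) ^ 3 ^ m = (t ^ 3 ^ m) ^ 3 ^ m * t ^ 3 ^ m"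
    by (simp only: power_add power_one_right power_mult_distrib)
  also have "\<dots> = t ^ (3 ^ m + 1)"
    by (simp add: power_3_pow_m_involution mult.commute)
  finally show ?thesis
    using assms by (simp add: subF_def)
qed

text \<open>The norm \<open>t \<mapsto> t\<^sup>q\<^sup>+\<^sup>1\<close> maps the \<open>q\<^sup>2 - 1\<close> nonzero elements into \<open>subF m - {0}\<close>, a set
  of at most \<open>q - 1\<close> roots of \<open>x\<^sup>q\<^sup>-\<^sup>1 = 1\<close>, with fibres of at most \<open>q + 1\<close> roots;
  the count leaves no room for slack.\<close>

lemma
  shows card_subF: "card (subF m :: 'a set) = 3 ^ m"
    and card_norm_fibre: "y \<in> subF m - {0} \<Longrightarrow> card {t::'a. t ^ (3 ^ m + 1) = y} = 3 ^ m + 1"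
proof -
  define q :: nat where "q = 3 ^ m"
  have "q \<ge> 3"
    using power_increasing[of 1 m "3::nat"] m_pos by (simp add: q_def)
  define R where "R = (subF m :: 'a set) - {0}"
  define fibre where "fibre y = card {t \<in> UNIV - {0}. t ^ (q + 1) = y}" for y :: 'a
  have "R \<subseteq> {x. x ^ (q - 1) = 1}"
  proof
    fix x assume x: "x \<in> R"
    have "q = Suc (q - 1)"
      using \<open>q \<ge> 3\<close> by simp
    then have "x ^ (q - 1) * x = x ^ q"
      by (metis power_Suc2)
    also have "\<dots> = 1 * x"
      using x by (simp add: R_def subF_def q_def)
    finally show "x \<in> {x. x ^ (q - 1) = 1}"
      using x by (simp add: R_def)
  qed
  then have "card R \<le> card {x::'a. x ^ (q - 1) = 1}"
    by (intro card_mono) simp_all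
  also have "\<dots> \<le> q - 1"
    by (rule card_roots_power_le) (use \<open>q \<ge> 3\<close> in simp)
  finally have card_R: "card R \<le> q - 1" .
  have fibre_le: "fibre y \<le> q + 1" for y
  proof -
    have "fibre y \<le> card {t::'a. t ^ (q + 1) = y}"
      unfolding fibre_def by (intro card_mono) auto
    also have "\<dots> \<le> q + 1"
      by (rule card_roots_power_le) simp
    finally show ?thesis .
  qed
  have "(\<lambda>t. t ^ (q + 1)) ` (UNIV - {0}) \<subseteq> R"
    using norm_in_subF by (auto simp: R_def q_def)
  then have "(\<Sum>y\<in>R. fibre y) = card (UNIV - {0::'a})"
    using sum.group[of "UNIV - {0::'a}" R "\<lambda>t. t ^ (q + 1)" "\<lambda>_. 1::nat"] by (simp add: fibre_def)
  also have "\<dots> = q * q - 1"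
    by (simp add: card_Diff_singleton card_UNIV q_def mult_2 power_add)
  also have "\<dots> = (q - 1) * (q + 1)"
    using \<open>q \<ge> 3\<close> by (cases q) simp_all
  finally have sum_fibre: "(\<Sum>y\<in>R. fibre y) = (q - 1) * (q + 1)" .
  have "card R = q - 1"
    by (rule sum_eq_bound_imp_card_eq(1)[OF _ card_R fibre_le sum_fibre]) simp_all
  moreover have "subF m = insert (0::'a) R" "0 \<notin> R"
    by (auto simp: R_def)
  ultimately show "card (subF m :: 'a set) = 3 ^ m"
    using \<open>q \<ge> 3\<close> by (simp add: q_def)
  assume "y \<in> subF m - {0}"
  then have "fibre y = q + 1"
    by (intro sum_eq_bound_imp_card_eq(2)[OF _ card_R fibre_le sum_fibre]) (simp_all add: R_def)
  moreover have "{t \<in> UNIV - {0}. t ^ (q + 1) = y} = {t. t ^ (q + 1) = y}"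
    using \<open>y \<in> subF m - {0}\<close> by auto
  ultimately show "card {t::'a. t ^ (3 ^ m + 1) = y} = 3 ^ m + 1"
    by (simp add: fibre_def q_def)
qed

lemma card_Tr_linear_level:
  assumes "(b::'a) \<noteq> 0" "u \<in> F3"
  shows "3 * card {t::'a. Tr (2 * m) (b * t) = u} = 3 ^ (2 * m)"
proof -
  have "3 ^ (2 * m - 1) < (3::nat) ^ (2 * m)"
    using m_pos by (intro power_strict_increasing) auto
  then obtain y :: 'a where y: "Tr (2 * m) y \<noteq> 0"
    using exists_Tr_nonzero[of "2 * m" "UNIV :: 'a set"] m_pos by (auto simp: card_UNIV)
  have "3 * card {t \<in> UNIV. Tr (2 * m) (b * t) = u} = card (UNIV :: 'a set)"
    by (rule card_level_set_additive[OF CHAR_eq_3, of UNIV _ "y / b"])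
      (use assms y in \<open>simp_all add: Tr_2m_in_F3 Tr_add[OF CHAR_eq_3] distrib_left\<close>)
  then show ?thesis
    by (simp add: card_UNIV)
qed

lemma card_Tr_subF_level:
  assumes "(a::'a) \<in> subF m - {0}" "u \<in> F3"
  shows "3 * card {x \<in> subF m. Tr (2 * m) (a * x) = u} = 3 ^ m"
proof -
  have "3 ^ (m - 1) < card (subF m :: 'a set)"
    using m_pos by (simp add: card_subF power_strict_increasing)
  then obtain y :: 'a where y: "y \<in> subF m" "Tr m y \<noteq> 0"
    using exists_Tr_nonzero[of m "subF m :: 'a set"] m_pos by auto
  then have "Tr (2 * m) (a * (y / a)) \<noteq> 0"
    using assms(1) Tr_double[of y m] char3_two_neq_0[OF CHAR_eq_3] by simp
  then have "3 * card {x \<in> subF m. Tr (2 * m) (a * x) = u} = card (subF m :: 'a set)"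
    by (intro card_level_set_additive[OF CHAR_eq_3, of _ _ "y / a"])
      (use assms y in \<open>simp_all add: Tr_2m_in_F3 Tr_add[OF CHAR_eq_3] distrib_left
        subF_add[OF CHAR_eq_3] subF_divide\<close>)
  then show ?thesis
    by (simp add: card_subF)
qed

lemma card_Tr_norm_level:
  assumes "(a::'a) \<in> subF m - {0}" "u \<in> F3"
  shows "card {t::'a. Tr (2 * m) (a * t ^ (3 ^ m + 1)) = u}
    = (if u = 0 then 1 + (3 ^ m + 1) * (3 ^ (m - 1) - 1) else (3 ^ m + 1) * 3 ^ (m - 1))"
proof -
  define Z where "Z = {t::'a. Tr (2 * m) (a * t ^ (3 ^ m + 1)) = u}"
  define Y where "Y = {y \<in> subF m. Tr (2 * m) (a * y) = u}"
  have "3 * card Y = 3 * 3 ^ (m - 1)"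
    using card_Tr_subF_level[OF assms] m_pos by (simp add: Y_def flip: power_Suc)
  then have card_Y: "card Y = 3 ^ (m - 1)"
    by simp
  have fibre: "card {t \<in> Z. t ^ (3 ^ m + 1) = y} = (if y = 0 then 1 else 3 ^ m + 1)"
    if "y \<in> Y" for y
  proof -
    have "{t \<in> Z. t ^ (3 ^ m + 1) = y} = {t. t ^ (3 ^ m + 1) = y}"
      using that by (auto simp: Z_def Y_def)
    moreover have "{t::'a. t ^ (3 ^ m + 1) = 0} = {0}"
      by auto
    ultimately show ?thesis
      using that card_norm_fibre[of y] by (auto simp: Y_def)
  qed
  have "t ^ (3 ^ m + 1) \<in> Y" if "t \<in> Z" for t
  proof (cases "t = 0")
    case False
    with that show ?thesis
      using norm_in_subF[of t] by (simp add: Z_def Y_def)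
  qed (use that in \<open>simp add: Z_def Y_def\<close>)
  then have "(\<lambda>t. t ^ (3 ^ m + 1)) ` Z \<subseteq> Y"
    by blast
  then have "card Z = (\<Sum>y\<in>Y. card {t \<in> Z. t ^ (3 ^ m + 1) = y})"
    using sum.group[of Z Y "\<lambda>t. t ^ (3 ^ m + 1)" "\<lambda>_. 1::nat"] by simp
  also have "\<dots> = (\<Sum>y\<in>Y. if y = 0 then 1 else 3 ^ m + 1)"
    by (rule sum.cong[OF refl fibre])
  also have "\<dots> = (if u = 0 then 1 + (3 ^ m + 1) * (3 ^ (m - 1) - 1) else (3 ^ m + 1) * 3 ^ (m - 1))"
  proof (cases "u = 0")
    case True
    then have "0 \<in> Y"
      by (simp add: Y_def)
    then have "(\<Sum>y\<in>Y. if y = 0 then 1 else 3 ^ m + 1) = 1 + (\<Sum>y\<in>Y - {0}. 3 ^ m + 1 :: nat)"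
      by (simp add: sum.remove[of Y 0])
    with True \<open>0 \<in> Y\<close> show ?thesis
      by (simp add: card_Y mult.commute)
  next
    case False
    then have "0 \<notin> Y"
      by (simp add: Y_def)
    then have "(\<Sum>y\<in>Y. if y = 0 then 1 else 3 ^ m + 1) = (\<Sum>y\<in>Y. 3 ^ m + 1 :: nat)"
      by (intro sum.cong) auto
    with False show ?thesis
      by (simp add: card_Y mult.commute)
  qed
  finally show ?thesis
    by (simp add: Z_def)
qed

section \<open>Minimum-weight codewords\<close>

lemma Tr_norm_shift:
  assumes "(a::'a) \<in> subF m"
  shows "Tr (2 * m) (a * (t + s) ^ (3 ^ m + 1))
    = Tr (2 * m) (a * t ^ (3 ^ m + 1)) + Tr (2 * m) (2 * a * s ^ 3 ^ m * t) + Tr (2 * m) (a * s ^ (3 ^ m + 1))"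
proof -
  let ?q = "3 ^ m :: nat" and ?T = "Tr (2 * m) :: 'a \<Rightarrow> 'a"
  have "(t + s) ^ (?q + 1) = t ^ ?q * t + t ^ ?q * s + s ^ ?q * t + s ^ ?q * s"
    by (simp only: power_add power_one_right char3_power_add[OF CHAR_eq_3]) (simp add: algebra_simps)
  then have "?T (a * (t + s) ^ (?q + 1))
      = ?T (a * t ^ (?q + 1)) + ?T (a * t ^ ?q * s) + ?T (a * s ^ ?q * t) + ?T (a * s ^ (?q + 1))"
    by (simp add: Tr_add[OF CHAR_eq_3] algebra_simps)
  moreover have "?T (a * t ^ ?q * s) = ?T (a * s ^ ?q * t)" \<comment> \<open>Frobenius conjugates\<close>
  proof -
    have "a ^ ?q = a"
      using assms by (simp add: subF_def)
    then have "(a * s ^ ?q * t) ^ ?q = a * t ^ ?q * s"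
      by (simp add: power_mult_distrib power_3_pow_m_involution ac_simps)
    then show ?thesis
      using Tr_power_3_pow[OF CHAR_eq_3 power_3_pow_2m, of "a * s ^ ?q * t" m] by simp
  qed
  moreover have "?T (2 * a * s ^ ?q * t) = ?T (a * s ^ ?q * t) + ?T (a * s ^ ?q * t)"
    by (simp only: mult_2 distrib_right Tr_add[OF CHAR_eq_3])
  ultimately show ?thesis
    by (simp add: add.assoc)
qed

lemma Tr_norm_shift_minus:
  assumes "(a::'a) \<in> subF m"
  shows "Tr (2 * m) (a * (t + - s) ^ (3 ^ m + 1))
    = Tr (2 * m) (a * t ^ (3 ^ m + 1)) - Tr (2 * m) (2 * a * s ^ 3 ^ m * t) + Tr (2 * m) (a * s ^ (3 ^ m + 1))"
proof -
  have minus_q: "(- s) ^ 3 ^ m = - (s ^ 3 ^ m)"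
    by (rule char3_power_minus[OF CHAR_eq_3])
  then have "(- s) ^ (3 ^ m + 1) = s ^ (3 ^ m + 1)"
    by (simp add: power_add)
  moreover have "Tr (2 * m) (2 * a * (- s) ^ 3 ^ m * t) = - Tr (2 * m) (2 * a * s ^ 3 ^ m * t)"
    by (simp add: minus_q Tr_uminus[OF CHAR_eq_3, symmetric])
  ultimately show ?thesis
    by (simp only: Tr_norm_shift[OF assms, of t "- s"] diff_conv_add_uminus)
qed

lemma exists_shift:
  assumes "(a::'a) \<noteq> 0"
  obtains s where "2 * a * s ^ 3 ^ m = b"
proof
  show "2 * a * ((b / (2 * a)) ^ 3 ^ m) ^ 3 ^ m = b"
    using assms char3_two_neq_0[OF CHAR_eq_3] by (simp add: power_3_pow_m_involution)
qed

lemma codeC_in_F3: "c \<in> codeC m \<Longrightarrow> c (t::'a) \<in> F3"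
  by (auto simp: codeC_def intro: F3_add[OF CHAR_eq_3] Tr_2m_in_F3)

lemma shifted_norm_in_codeC:
  assumes "(a::'a) \<in> subF m" "v \<in> F3"
  shows "(\<lambda>t. Tr (2 * m) (a * (t + s) ^ (3 ^ m + 1)) + v) \<in> codeC m"
proof -
  have "(\<lambda>t. Tr (2 * m) (a * (t + s) ^ (3 ^ m + 1)) + v)
      = (\<lambda>t. Tr (2 * m) (a * t ^ (3 ^ m + 1) + 2 * a * s ^ 3 ^ m * t) + (Tr (2 * m) (a * s ^ (3 ^ m + 1)) + v))"
    unfolding Tr_norm_shift[OF assms(1)] Tr_add[OF CHAR_eq_3] by (simp only: add.assoc)
  moreover have "Tr (2 * m) (a * s ^ (3 ^ m + 1)) + v \<in> F3"
    by (rule F3_add[OF CHAR_eq_3 Tr_2m_in_F3 assms(2)])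
  ultimately show ?thesis
    unfolding codeC_def using assms(1) by blast
qed

lemma card_zeros_codeC_le:
  assumes "c \<in> (codeC m :: ('a \<Rightarrow> 'a) set)" "c \<noteq> (\<lambda>_. 0)"
  shows "card {t. c t = 0} \<le> (3 ^ m + 1) * 3 ^ (m - 1)"
proof -
  obtain a b h where c: "c = (\<lambda>t. Tr (2 * m) (a * t ^ (3 ^ m + 1) + b * t) + h)"
    and a: "a \<in> subF m" and h: "h \<in> F3"
    using assms(1) by (auto simp: codeC_def)
  consider (quadratic) "a \<noteq> 0" | (affine) "a = 0" "b \<noteq> 0" | (const) "a = 0" "b = 0"
    by blast
  then show ?thesis
  proof cases
    case quadratic
    obtain s where s: "2 * a * s ^ 3 ^ m = b"
      using exists_shift[OF quadratic] .
    define u where "u = Tr (2 * m) (a * s ^ (3 ^ m + 1)) - h"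
    have "u \<in> F3"
      unfolding u_def diff_conv_add_uminus by (intro F3_add[OF CHAR_eq_3] F3_uminus Tr_2m_in_F3 h)
    have "c t = Tr (2 * m) (a * (t + s) ^ (3 ^ m + 1)) - u" for t
    proof -
      have "c t = Tr (2 * m) (a * t ^ (3 ^ m + 1)) + Tr (2 * m) (b * t) + h"
        by (simp only: c Tr_add[OF CHAR_eq_3])
      also have "\<dots> = Tr (2 * m) (a * (t + s) ^ (3 ^ m + 1)) - u"
        by (simp only: Tr_norm_shift[OF a] s u_def) (simp add: algebra_simps)
      finally show ?thesis .
    qed
    then have "c t = 0 \<longleftrightarrow> Tr (2 * m) (a * (t + s) ^ (3 ^ m + 1)) = u" for t
      by simp
    then have "card {t. c t = 0} = card {t. Tr (2 * m) (a * t ^ (3 ^ m + 1)) = u}"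
      using card_translate[of "\<lambda>t. Tr (2 * m) (a * t ^ (3 ^ m + 1)) = u" s] by simp
    also have "\<dots> \<le> (3 ^ m + 1) * 3 ^ (m - 1)"
      using card_Tr_norm_level[of a u] a quadratic \<open>u \<in> F3\<close> by (simp add: diff_le_self)
    finally show ?thesis .
  next
    case affine
    have "{t. c t = 0} = {t. Tr (2 * m) (b * t) = - h}"
      by (auto simp: c affine eq_neg_iff_add_eq_0)
    then have "3 * card {t. c t = 0} = 3 ^ (2 * m)"
      using card_Tr_linear_level[OF affine(2) F3_uminus[OF h]] by simp
    moreover have "(3::nat) ^ (2 * m) \<le> 3 * ((3 ^ m + 1) * 3 ^ (m - 1))"
    proof -
      have "(3::nat) ^ m = 3 * 3 ^ (m - 1)"
        using m_pos by (simp flip: power_Suc)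
      then have "(3::nat) ^ (2 * m) = 3 * (3 ^ m * 3 ^ (m - 1))"
        by (metis mult_2 power_add mult.left_commute)
      then show ?thesis
        by simp
    qed
    ultimately show ?thesis
      by linarith
  next
    case const
    then have "{t. c t = 0} = {}"
      using assms(2) by (auto simp: c)
    then show ?thesis
      by simp
  qed
qed

lemma hweight_shifted_norm:
  assumes "(a::'a) \<in> subF m - {0}" "v \<in> F3 - {0}"
  shows "hweight (\<lambda>t. Tr (2 * m) (a * (t + s) ^ (3 ^ m + 1)) + v) = 3 ^ (2 * m) - (3 ^ m + 1) * 3 ^ (m - 1)"
proof -
  have "card {t. Tr (2 * m) (a * (t + s) ^ (3 ^ m + 1)) + v = 0}
      = card {t::'a. Tr (2 * m) (a * t ^ (3 ^ m + 1)) = - v}"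
    using card_translate[of "\<lambda>t. Tr (2 * m) (a * t ^ (3 ^ m + 1)) = - v" s]
    by (simp add: eq_neg_iff_add_eq_0)
  also have "\<dots> = (3 ^ m + 1) * 3 ^ (m - 1)"
    using card_Tr_norm_level[OF assms(1) F3_uminus, of v] assms(2) by simp
  finally show ?thesis
    by (simp add: hweight_eq_card_diff_zeros card_UNIV)
qed

lemma minw_codeC: "minw (codeC m :: ('a \<Rightarrow> 'a) set) = 3 ^ (2 * m) - (3 ^ m + 1) * 3 ^ (m - 1)"
  unfolding minw_def
proof (rule Min_eqI)
  show "finite {hweight c |c. c \<in> (codeC m :: ('a \<Rightarrow> 'a) set) \<and> c \<noteq> (\<lambda>_. 0)}"
    by simp
next
  fix w assume "w \<in> {hweight c |c. c \<in> (codeC m :: ('a \<Rightarrow> 'a) set) \<and> c \<noteq> (\<lambda>_. 0)}"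
  then obtain c :: "'a \<Rightarrow> 'a" where c: "c \<in> codeC m" "c \<noteq> (\<lambda>_. 0)" "w = hweight c"
    by blast
  show "3 ^ (2 * m) - (3 ^ m + 1) * 3 ^ (m - 1) \<le> w"
    using card_zeros_codeC_le[OF c(1,2)] by (simp add: c(3) hweight_eq_card_diff_zeros card_UNIV)
next
  let ?g = "\<lambda>t. Tr (2 * m) ((1::'a) * (t + 0) ^ (3 ^ m + 1)) + 1"
  have "hweight ?g = 3 ^ (2 * m) - (3 ^ m + 1) * 3 ^ (m - 1)"
    by (rule hweight_shifted_norm) simp_all
  moreover have "?g \<in> codeC m"
    by (rule shifted_norm_in_codeC) simp_all
  moreover have "?g \<noteq> (\<lambda>_. 0)"
    using calculation(1) norm_level_bound_lt[OF m_pos] by (metis hweight_zero zero_less_diff less_irrefl)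
  ultimately show "3 ^ (2 * m) - (3 ^ m + 1) * 3 ^ (m - 1)
      \<in> {hweight c |c. c \<in> (codeC m :: ('a \<Rightarrow> 'a) set) \<and> c \<noteq> (\<lambda>_. 0)}"
    by force
qed

lemma incvec_blocks_codeC_eq_square:
  assumes "B \<in> (incvec :: 'a set \<Rightarrow> 'a \<Rightarrow> 'a) ` blocks (codeC m)"
  obtains c where "c \<in> codeC m" "B = (\<lambda>t. (c t)\<^sup>2)"
proof -
  obtain c where "c \<in> codeC m" "B = incvec {t. c t \<noteq> 0}"
    using assms by (auto simp: blocks_def)
  then show ?thesis
    using that incvec_support_eq_square[of c] codeC_in_F3 by auto
qed

lemma square_shifted_norm_in_incvec_blocks:
  assumes "(a::'a) \<in> subF m - {0}" "v \<in> F3 - {0}"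
  shows "(\<lambda>t. (Tr (2 * m) (a * (t + s) ^ (3 ^ m + 1)) + v)\<^sup>2) \<in> (incvec :: 'a set \<Rightarrow> 'a \<Rightarrow> 'a) ` blocks (codeC m)"
proof -
  let ?g = "\<lambda>t. Tr (2 * m) (a * (t + s) ^ (3 ^ m + 1)) + v"
  have g: "?g \<in> codeC m"
    using assms by (intro shifted_norm_in_codeC) auto
  have weight: "hweight ?g = minw (codeC m :: ('a \<Rightarrow> 'a) set)"
    using hweight_shifted_norm[OF assms] by (simp add: minw_codeC)
  then have "hweight ?g > 0"
    using norm_level_bound_lt[OF m_pos] by (simp add: minw_codeC)
  then have "?g \<noteq> (\<lambda>_. 0)"
    by (intro notI) simp
  with g weight have "{t. ?g t \<noteq> 0} \<in> blocks (codeC m)"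
    unfolding blocks_def by (intro CollectI exI[of _ ?g]) simp
  moreover have "(\<lambda>t. (?g t)\<^sup>2) = incvec {t. ?g t \<noteq> 0}"
    by (rule sym, intro incvec_support_eq_square codeC_in_F3[OF g])
  ultimately show ?thesis
    by (intro image_eqI)
qed

section \<open>The span of the blocks\<close>

lemma incvec_blocks_subset_span_gens:
  "(incvec :: 'a set \<Rightarrow> 'a \<Rightarrow> 'a) ` blocks (codeC m) \<subseteq> span3 (gens m)"
proof
  fix B assume "B \<in> (incvec :: 'a set \<Rightarrow> 'a \<Rightarrow> 'a) ` blocks (codeC m)"
  then obtain c where "c \<in> codeC m" "B = (\<lambda>t. (c t)\<^sup>2)"
    by (rule incvec_blocks_codeC_eq_square)
  then obtain a b h where a: "a \<in> subF m" and h: "h \<in> F3"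
    and B: "B = (\<lambda>t. (Tr (2 * m) (a * t ^ (3 ^ m + 1) + b * t) + h)\<^sup>2)"
    by (auto simp: codeC_def)
  let ?A = "\<lambda>t. Tr (2 * m) (a * t ^ (3 ^ m + 1))" and ?L = "\<lambda>t. Tr (2 * m) (b * t)"
  have "B = (\<lambda>t. ?A t * ?A t + ?L t * ?L t + h\<^sup>2 * 1 + 2 * (?A t * ?L t) + (2 * h) * ?A t + (2 * h) * ?L t)"
  proof -
    have "(x + y + h)\<^sup>2 = x * x + y * y + h\<^sup>2 * 1 + 2 * (x * y) + (2 * h) * x + (2 * h) * y" for x y :: 'a
      by (simp add: power2_eq_square algebra_simps)
    then show ?thesis
      unfolding B Tr_add[OF CHAR_eq_3] by (intro ext) (simp only:)
  qed
  moreover have "h\<^sup>2 \<in> F3" "2 * h \<in> F3" "(2::'a) \<in> F3"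
    using h by (simp_all add: power2_eq_square F3_mult F3_uminus char3_two_eq_minus_one[OF CHAR_eq_3])
  ultimately show "B \<in> span3 (gens m)"
    by (simp only:) (intro span3_add span3_scale Tr_norm_terms_in_span_gens[OF a] Tr_linear_terms_in_span_gens)
qed

abbreviation design_code :: "('a \<Rightarrow> 'a) set"
  where "design_code \<equiv> span3 (incvec ` blocks (codeC m))"

lemma shifted_norm_in_design_code:
  assumes "(a::'a) \<in> subF m - {0}"
  shows "(\<lambda>t. Tr (2 * m) (a * (t + s) ^ (3 ^ m + 1))) \<in> design_code"
proof -
  let ?X = "\<lambda>t. Tr (2 * m) (a * (t + s) ^ (3 ^ m + 1))"
  have "(\<lambda>t. (?X t + 1)\<^sup>2 - (?X t + -1)\<^sup>2) \<in> design_code"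
    using assms by (intro span3_diff span3_base square_shifted_norm_in_incvec_blocks) simp_all
  moreover have "(?X t + 1)\<^sup>2 - (?X t + -1)\<^sup>2 = ?X t" for t
    using char3_diff_squares[OF CHAR_eq_3, of "?X t" 1 0] by simp
  ultimately show ?thesis
    by simp
qed

text \<open>\<open>Q\<^sub>1(t + s) + Q\<^sub>1(t - s) - 2 Q\<^sub>1(t) = 2 Q\<^sub>1(s)\<close>, which is \<open>-1\<close> for a point with \<open>Q\<^sub>1(s) = 1\<close>.\<close>

lemma one_in_design_code: "(\<lambda>t. 1) \<in> design_code"
proof -
  have "card {t::'a. Tr (2 * m) (1 * t ^ (3 ^ m + 1)) = 1} \<noteq> 0"
    using card_Tr_norm_level[of 1 1] by simp
  then have "{t::'a. Tr (2 * m) (1 * t ^ (3 ^ m + 1)) = 1} \<noteq> {}"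
    by (metis card.empty)
  then obtain s :: 'a where K: "Tr (2 * m) (s ^ (3 ^ m + 1)) = 1"
    by auto
  define X where "X s' t = Tr (2 * m) (1 * (t + s') ^ (3 ^ m + 1))" for s' t :: 'a
  have "(\<lambda>t. (-1) * (X s t + X (- s) t - X 0 t - X 0 t)) \<in> design_code"
    unfolding X_def by (intro span3_scale span3_diff span3_add shifted_norm_in_design_code) simp_all
  moreover have "(-1) * (X s t + X (- s) t - X 0 t - X 0 t) = 1" for t
    using Tr_norm_shift[OF subF_1, of t s] Tr_norm_shift_minus[OF subF_1, of t s] K
      char3_two_eq_minus_one[OF CHAR_eq_3]
    by (simp add: X_def algebra_simps)
  ultimately show ?thesis
    by simp
qed

lemma square_shifted_norm_in_design_code:
  assumes "(a::'a) \<in> subF m - {0}"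
  shows "(\<lambda>t. (Tr (2 * m) (a * (t + s) ^ (3 ^ m + 1)))\<^sup>2) \<in> design_code"
proof -
  let ?X = "\<lambda>t. Tr (2 * m) (a * (t + s) ^ (3 ^ m + 1))"
  have "(\<lambda>t. (?X t + 1)\<^sup>2 + ?X t - 1) \<in> design_code"
    using assms by (intro span3_diff span3_add span3_base square_shifted_norm_in_incvec_blocks
        shifted_norm_in_design_code one_in_design_code) simp_all
  moreover have "(x + 1)\<^sup>2 + x - 1 = x\<^sup>2" for x :: 'a
  proof -
    have "(x + 1)\<^sup>2 + x - 1 = x\<^sup>2 + 3 * x"
      by (simp add: power2_eq_square algebra_simps)
    then show ?thesis
      by (simp add: three_eq_0)
  qed
  ultimately show ?thesis
    by simp
qed

lemma Tr_linear_in_design_code: "(\<lambda>t. Tr (2 * m) (b * t)) \<in> design_code"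
proof -
  obtain s :: 'a where s: "2 * s ^ 3 ^ m = b"
    by (rule exists_shift[of 1 b]) auto
  define X where "X s' t = Tr (2 * m) (1 * (t + s') ^ (3 ^ m + 1))" for s' t :: 'a
  have "(\<lambda>t. X s t - X 0 t - Tr (2 * m) (s ^ (3 ^ m + 1)) * 1) \<in> design_code"
    unfolding X_def by (intro span3_diff span3_scale shifted_norm_in_design_code one_in_design_code Tr_2m_in_F3) simp_all
  moreover have "X s t - X 0 t - Tr (2 * m) (s ^ (3 ^ m + 1)) * 1 = Tr (2 * m) (b * t)" for t
    using Tr_norm_shift[OF subF_1, of t s] by (simp add: X_def s)
  ultimately show ?thesis
    by simp
qed

lemma Tr_norm_in_design_code:
  assumes "(a::'a) \<in> subF m - {0}"
  shows "(\<lambda>t. Tr (2 * m) (a * t ^ (3 ^ m + 1))) \<in> design_code"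
  using shifted_norm_in_design_code[OF assms, of 0] by simp

lemma Tr_norm_square_in_design_code:
  assumes "(a::'a) \<in> subF m"
  shows "(\<lambda>t. Tr (2 * m) (a * t ^ (3 ^ m + 1)) * Tr (2 * m) (a * t ^ (3 ^ m + 1))) \<in> design_code"
proof (cases "a = 0")
  case False
  then show ?thesis
    using square_shifted_norm_in_design_code[of a 0] assms by (simp add: power2_eq_square)
qed (simp add: span3_zero)

lemma Tr_norm_mult_in_design_code:
  assumes "(a::'a) \<in> subF m" "a' \<in> subF m"
  shows "(\<lambda>t. Tr (2 * m) (a * t ^ (3 ^ m + 1)) * Tr (2 * m) (a' * t ^ (3 ^ m + 1))) \<in> design_code"
proof -
  let ?A = "\<lambda>c t. Tr (2 * m) (c * t ^ (3 ^ m + 1))"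
  have "(\<lambda>t. ?A (a + a') t * ?A (a + a') t - ?A (a - a') t * ?A (a - a') t) \<in> design_code"
    using assms by (intro span3_diff Tr_norm_square_in_design_code subF_add[OF CHAR_eq_3] subF_diff[OF CHAR_eq_3])
  moreover have "?A (a + a') t * ?A (a + a') t - ?A (a - a') t * ?A (a - a') t = ?A a t * ?A a' t" for t
    using char3_diff_squares[OF CHAR_eq_3, of "?A a t" "?A a' t" 0]
    by (simp add: distrib_right left_diff_distrib Tr_add[OF CHAR_eq_3] Tr_diff[OF CHAR_eq_3] power2_eq_square)
  ultimately show ?thesis
    by simp
qed

lemma Tr_norm_mult_linear_in_design_code:
  assumes a: "(a::'a) \<in> subF m - {0}"
  shows "(\<lambda>t. Tr (2 * m) (a * t ^ (3 ^ m + 1)) * Tr (2 * m) (b * t)) \<in> design_code"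
proof -
  obtain s where s: "2 * a * s ^ 3 ^ m = b"
    using exists_shift a by blast
  define X where "X s' t = Tr (2 * m) (a * (t + s') ^ (3 ^ m + 1))" for s' t :: 'a
  define K where "K = Tr (2 * m) (a * s ^ (3 ^ m + 1))"
  have "(\<lambda>t. (X s t)\<^sup>2 - (X (- s) t)\<^sup>2 - K * Tr (2 * m) (b * t)) \<in> design_code"
    unfolding X_def K_def
    by (intro span3_diff span3_scale square_shifted_norm_in_design_code Tr_linear_in_design_code
        Tr_2m_in_F3 a)
  moreover have "(X s t)\<^sup>2 - (X (- s) t)\<^sup>2 - K * Tr (2 * m) (b * t) = Tr (2 * m) (a * t ^ (3 ^ m + 1)) * Tr (2 * m) (b * t)"
    for t
  proof -
    have "(X s t)\<^sup>2 - (X (- s) t)\<^sup>2 = (Tr (2 * m) (a * t ^ (3 ^ m + 1)) + K) * Tr (2 * m) (b * t)"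
      using a unfolding X_def K_def
      by (simp only: Tr_norm_shift[of a t s] Tr_norm_shift_minus[of a t s] s Diff_iff
          char3_diff_squares[OF CHAR_eq_3])
    then show ?thesis
      by (simp add: algebra_simps)
  qed
  ultimately show ?thesis
    by simp
qed

lemma Tr_linear_square_in_design_code: "(\<lambda>t. Tr (2 * m) (b * t) * Tr (2 * m) (b * t)) \<in> design_code"
proof -
  obtain s :: 'a where s: "2 * 1 * s ^ 3 ^ m = b"
    by (rule exists_shift[of 1 b]) auto
  define X where "X s' t = Tr (2 * m) (1 * (t + s') ^ (3 ^ m + 1))" for s' t :: 'a
  define K where "K = Tr (2 * m) (1 * s ^ (3 ^ m + 1))"
  have "(\<lambda>t. (-1) * ((X s t)\<^sup>2 + (X (- s) t)\<^sup>2) - (X 0 t)\<^sup>2 + K * X 0 t - (K * K) * 1) \<in> design_code"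
    unfolding X_def K_def
    by (intro span3_diff span3_add span3_scale F3_mult F3_minus_1 Tr_2m_in_F3 one_in_design_code
        square_shifted_norm_in_design_code shifted_norm_in_design_code) simp_all
  moreover have "(-1) * ((X s t)\<^sup>2 + (X (- s) t)\<^sup>2) - (X 0 t)\<^sup>2 + K * X 0 t - (K * K) * 1
      = Tr (2 * m) (b * t) * Tr (2 * m) (b * t)" for t
  proof -
    let ?A = "Tr (2 * m) (1 * t ^ (3 ^ m + 1))" and ?L = "Tr (2 * m) (b * t)"
    have "(X s t)\<^sup>2 + (X (- s) t)\<^sup>2 = - ((?A + K)\<^sup>2 + ?L\<^sup>2)"
      unfolding X_def K_def
      by (simp only: Tr_norm_shift[OF subF_1, of t s] Tr_norm_shift_minus[OF subF_1, of t s] s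
          char3_sum_squares[OF CHAR_eq_3])
    moreover have "X 0 t = ?A"
      by (simp add: X_def)
    moreover have "(?A + K)\<^sup>2 = ?A\<^sup>2 - K * ?A + K * K"
      using char3_two_eq_minus_one[OF CHAR_eq_3] by (simp add: power2_eq_square algebra_simps)
    ultimately show ?thesis
      by (simp add: power2_eq_square)
  qed
  ultimately show ?thesis
    by simp
qed

lemma Tr_linear_mult_in_design_code:
  "(\<lambda>t. Tr (2 * m) (b * t) * Tr (2 * m) (b' * t)) \<in> design_code"
proof -
  let ?L = "\<lambda>c t. Tr (2 * m) (c * t)"
  have "(\<lambda>t. ?L (b + b') t * ?L (b + b') t - ?L (b - b') t * ?L (b - b') t) \<in> design_code"
    by (intro span3_diff Tr_linear_square_in_design_code)
  moreover have "?L (b + b') t * ?L (b + b') t - ?L (b - b') t * ?L (b - b') t = ?L b t * ?L b' t" for t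
    using char3_diff_squares[OF CHAR_eq_3, of "?L b t" "?L b' t" 0]
    by (simp add: distrib_right left_diff_distrib Tr_add[OF CHAR_eq_3] Tr_diff[OF CHAR_eq_3] power2_eq_square)
  ultimately show ?thesis
    by simp
qed

lemma gens_subset_design_code: "gens m \<subseteq> design_code"
proof
  fix g assume "g \<in> (gens m :: ('a \<Rightarrow> 'a) set)"
  then show "g \<in> design_code"
    unfolding gens_def
    using Tr_linear_mult_in_design_code Tr_linear_in_design_code Tr_norm_mult_linear_in_design_code
      Tr_norm_mult_in_design_code Tr_norm_in_design_code one_in_design_code
    by blast
qed

end

theorem lemma3p10:
  fixes m :: nat
  assumes "m \<ge> 2"
    and "card (UNIV :: 'a::{field,finite} set) = 3 ^ (2*m)"
  shows "span3 ((incvec :: 'a set \<Rightarrow> 'a \<Rightarrow> 'a) ` blocks (codeC m :: ('a \<Rightarrow> 'a) set))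
         = span3 (gens m :: ('a \<Rightarrow> 'a) set)"
proof -
  interpret gf_3_2m m
    using assms by unfold_locales simp_all
  show ?thesis
    by (rule span3_eqI[OF incvec_blocks_subset_span_gens gens_subset_design_code])
qed

end
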